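(* Let $q$ be a prime power, $m\ge1$, $1\le k\le n$, $g_1,\dots,g_n\in\mathbb{F}_{q^m}$ linearly independent over $\mathbb{F}_q$, $\mathbf g=(g_1,\dots,g_n)$, $\mathbf r\in\mathbb{F}_{q^m}^n$. Then Algorithm 2 (described in the context) produces a minimal basis $\{b^{(1)},b^{(2)}\}$ of the interpolation module $\mathfrak M(\mathbf r)$ with respect to the $(0,k-1)$-weighted term-over-position order. Moreover, $\mathrm{lpos}(b^{(1)})=1$ and $\mathrm{lpos}(b^{(2)})=2$.
   Context: Write $[i]:=q^i$. A $q$-linearized polynomial is $f(x)=\sum_{i=0}^{d}a_ix^{[i]}$, $a_i\in\mathbb{F}_{q^m}$; if $a_d\ne0$, $d=\mathrm{qdeg}(f)$ ($\mathrm{qdeg}(0)=-\infty$). $\mathcal{L}_q(x,q^m)$ is the ring of these under addition and composition $\circ$. $\Pi_{\mathbf g}(x)=\prod_{u\in\langle g_1,\dots,g_n\rangle}(x-u)$ ($\mathbb{F}_q$-span), of $q$-degree $n$ in $\mathcal{L}_q(x,q^m)$. For $\mathbf r=(r_1,\dots,r_n)$, $\Lambda_{\mathbf g,\mathbf r}(x)=\sum_{i=1}^n(-1)^{n-i}r_i\det(\mathfrak D_i(\mathbf g,x))/\det(M_n(g_1,\dots,g_n))$ ($M_n(v_1,\dots,v_s)$ the $n\times s$ matrix with $(j,l)$ entry $v_l^{[j-1]}$; $\mathfrak D_i(\mathbf g,x)$ is $M_n(g_1,\dots,g_n,x)$ without the $i$-th column), in $\mathcal{L}_q(x,q^m)$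 with $\Lambda_{\mathbf g,\mathbf r}(g_i)=r_i$. $\mathcal{L}_q(x,q^m)^2$ is a left module via $h\circ[f_1\ f_2]=[h\circ f_1\ \ h\circ f_2]$; $\mathfrak M(\mathbf r)$ is the set of all $\beta\circ[\Pi_{\mathbf g}\ \ 0]+\gamma\circ[-\Lambda_{\mathbf g,\mathbf r}\ \ x]$, $\beta,\gamma\in\mathcal{L}_q(x,q^m)$. Monomials are $x^{[i]}e_j$, $j\in\{1,2\}$. $(0,k-1)$-weighted term-over-position order: with $w_1=0$, $w_2=k-1$, $x^{[i_1]}e_{j_1}<x^{[i_2]}e_{j_2}$ iff $i_1+w_{j_1}<i_2+w_{j_2}$ or ($i_1+w_{j_1}=i_2+w_{j_2}$ and $j_1<j_2$). $\mathrm{lm}(f)$ is the largest monomial of nonzero $f$, $\mathrm{lt}(f)$ that term with its coefficient, $\mathrm{lpos}(f)$ its coordinate. A basis of a submodule is a generating set that is linearly independent ($\sum a_i\circ f^{(i)}=0\Rightarrow$ all $a_i=0$). $f$ reduces modulo a set $F$ of nonzero elements in one step if $h=f-\sum_i(b_ix^{[a_i]})\circ f^{(i)}$ for some $f^{(i)}\in F$, $b_i\in\mathbb{F}_{q^m}$, $a_i\ge0$ with $\mathrm{lm}(f)=x^{[a_i]}\circ\mathrm{lm}(f^{(i)})$ and $\mathrm{lt}(f)=\sum_i(b_ix^{[a_i]})\circ\mathrm{lt}(f^{(i)})$; $f$ is minimal w.r.t. $F$ if it cannot be reduced modulo $F$; a basis $B$ is minimal if each $b\in B$ is minimal w.r.t.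 $B\setminus\{b\}$. Algorithm 2 (input $k$, $\Pi_{\mathbf g}$, $\Lambda_{\mathbf g,\mathbf r}$): $P_0=\Pi_{\mathbf g}$, $K_0=0$, $N_0=-\Lambda_{\mathbf g,\mathbf r}$, $D_0=x$, $j=0$; while $\mathrm{qdeg}(D_j)+k-1<\mathrm{qdeg}(N_j)$: compute (right symbolic division) $q_j,r_j$ with $P_j=q_j\circ N_j+r_j$ and $\mathrm{qdeg}(r_j)<\mathrm{qdeg}(N_j)$; set $P_{j+1}=N_j$, $K_{j+1}=D_j$, $N_{j+1}=r_j$, $D_{j+1}=K_j-q_j\circ D_j$; $j:=j+1$. Return $b^{(1)}=[P_j\ \ K_j]$ and $b^{(2)}=[N_j\ \ D_j]$. *)

theory Defs
  imports "Jordan_Normal_Form.Determinant"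
    "HOL-Computational_Algebra.Polynomial"
    "HOL-Computational_Algebra.Primes"
    "HOL-Library.Extended_Real"
    "HOL-Library.Product_Plus"
    "HOL-Library.While_Combinator"
begin

(* The field F_{q^m} is a finite field type 'a with CARD('a) = q^m.
   F_q is its unique subfield of order q, i.e. the roots of x^q - x. *)
definition Fq :: "nat \<Rightarrow> 'a::field set" where
  "Fq q = {x. x ^ q = x}"

(* g_1..g_n are represented (0-based) as g 0 .. g (n-1) *)
definition lin_indep_Fq :: "nat \<Rightarrow> nat \<Rightarrow> (nat \<Rightarrow> 'a::field) \<Rightarrow> bool" where
  "lin_indep_Fq q n g \<longleftrightarrow>
     (\<forall>c. (\<forall>i<n. c i \<in> Fq q) \<longrightarrow> (\<Sum>i<n. c i * g i) = 0 \<longrightarrow> (\<forall>i<n. c i = 0))"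

definition span_Fq :: "nat \<Rightarrow> nat \<Rightarrow> (nat \<Rightarrow> 'a::field) \<Rightarrow> 'a set" where
  "span_Fq q n g = {\<Sum>i<n. c i * g i | c. \<forall>i<n. c i \<in> Fq q}"

(* q-linearized polynomials, as genuine polynomials whose support is on q-powers;
   composition is polynomial composition pcompose *)
definition Lq :: "nat \<Rightarrow> 'a::field poly set" where
  "Lq q = {f. \<forall>i. coeff f i \<noteq> 0 \<longrightarrow> (\<exists>j. i = q ^ j)}"

definition qdeg :: "nat \<Rightarrow> 'a::field poly \<Rightarrow> nat" where
  "qdeg q f = (THE i. degree f = q ^ i)"

definition qdeg_e :: "nat \<Rightarrow> 'a::field poly \<Rightarrow> ereal" where
  "qdeg_e q f = (if f = 0 then -\<infinity> else ereal (real (qdeg q f)))"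

definition Pi_g :: "nat \<Rightarrow> nat \<Rightarrow> (nat \<Rightarrow> 'a::field) \<Rightarrow> 'a poly" where
  "Pi_g q n g = (\<Prod>u\<in>span_Fq q n g. [:-u, 1:])"

definition Moore :: "nat \<Rightarrow> nat \<Rightarrow> (nat \<Rightarrow> 'a::field) \<Rightarrow> 'a mat" where
  "Moore q n g = mat n n (\<lambda>(j, l). g l ^ (q ^ j))"

(* D_i(g,x): M_n(g_1,...,g_n,x) with the i-th column (0-based) removed, over 'a poly *)
definition Dmat :: "nat \<Rightarrow> nat \<Rightarrow> (nat \<Rightarrow> 'a::field) \<Rightarrow> nat \<Rightarrow> 'a poly mat" where
  "Dmat q n g i = mat n n (\<lambda>(j, l). let c = (if l < i then l else l + 1) in
       if c < n then [: g c ^ (q ^ j) :] else monom 1 (q ^ j))"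

definition Lambda_gr :: "nat \<Rightarrow> nat \<Rightarrow> (nat \<Rightarrow> 'a::field) \<Rightarrow> (nat \<Rightarrow> 'a) \<Rightarrow> 'a poly" where
  "Lambda_gr q n g r =
     (\<Sum>i<n. smult ((-1) ^ (n - 1 - i) * r i / det (Moore q n g)) (det (Dmat q n g i)))"

definition act :: "'a::comm_ring_1 poly \<Rightarrow> 'a poly \<times> 'a poly \<Rightarrow> 'a poly \<times> 'a poly" where
  "act h f = (pcompose h (fst f), pcompose h (snd f))"

definition interp_module ::
  "nat \<Rightarrow> nat \<Rightarrow> (nat \<Rightarrow> 'a::field) \<Rightarrow> (nat \<Rightarrow> 'a) \<Rightarrow> ('a poly \<times> 'a poly) set" where
  "interp_module q n g r =
     {act \<beta> (Pi_g q n g, 0) + act \<gamma> (- Lambda_gr q n g r, [:0, 1:]) | \<beta> \<gamma>. \<beta> \<in> Lq q \<and> \<gamma> \<in> Lq q}"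

(* monomials x^{[i]} e_j are pairs (i, j), j \<in> {1,2};
   (0,k-1)-weighted term-over-position order *)
definition wtop_less :: "nat \<Rightarrow> nat \<times> nat \<Rightarrow> nat \<times> nat \<Rightarrow> bool" where
  "wtop_less k m1 m2 \<longleftrightarrow>
     (let w = (\<lambda>j::nat. if j = 1 then 0 else k - 1)
      in fst m1 + w (snd m1) < fst m2 + w (snd m2) \<or>
         (fst m1 + w (snd m1) = fst m2 + w (snd m2) \<and> snd m1 < snd m2))"

definition comp_of :: "nat \<Rightarrow> 'a poly \<times> 'a poly \<Rightarrow> 'a poly" where
  "comp_of j f = (if j = 1 then fst f else snd f)"

definition mons :: "nat \<Rightarrow> 'a::zero poly \<times> 'a poly \<Rightarrow> (nat \<times> nat) set" where
  "mons q f = {(i, j) | i j. j \<in> {1, 2} \<and> coeff (comp_of j f) (q ^ i) \<noteq> 0}"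

definition lm :: "nat \<Rightarrow> nat \<Rightarrow> 'a::zero poly \<times> 'a poly \<Rightarrow> nat \<times> nat" where
  "lm q k f = (THE m. m \<in> mons q f \<and> (\<forall>m'\<in>mons q f. m' \<noteq> m \<longrightarrow> wtop_less k m' m))"

definition lpos :: "nat \<Rightarrow> nat \<Rightarrow> 'a::zero poly \<times> 'a poly \<Rightarrow> nat" where
  "lpos q k f = snd (lm q k f)"

definition term_vec :: "nat \<Rightarrow> 'a::zero \<Rightarrow> nat \<times> nat \<Rightarrow> 'a poly \<times> 'a poly" where
  "term_vec q c m = (if snd m = 1 then (monom c (q ^ fst m), 0) else (0, monom c (q ^ fst m)))"

definition lm_vec :: "nat \<Rightarrow> nat \<Rightarrow> 'a::{zero,one} poly \<times> 'a poly \<Rightarrow> 'a poly \<times> 'a poly" where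
  "lm_vec q k f = term_vec q 1 (lm q k f)"

definition lt_vec :: "nat \<Rightarrow> nat \<Rightarrow> 'a::zero poly \<times> 'a poly \<Rightarrow> 'a poly \<times> 'a poly" where
  "lt_vec q k f = (let m = lm q k f in term_vec q (coeff (comp_of (snd m) f) (q ^ fst m)) m)"

(* one-step reduction of f modulo F: the family (f^(i), b_i, a_i) is a finite list *)
definition reduces :: "nat \<Rightarrow> nat \<Rightarrow> 'a::field poly \<times> 'a poly \<Rightarrow> ('a poly \<times> 'a poly) set \<Rightarrow> bool" where
  "reduces q k f F \<longleftrightarrow> f \<noteq> 0 \<and>
     (\<exists>ts :: (('a poly \<times> 'a poly) \<times> 'a \<times> nat) list.
        (\<forall>(fi, b, a) \<in> set ts. fi \<in> F \<and> lm_vec q k f = act (monom 1 (q ^ a)) (lm_vec q k fi)) \<and>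
        lt_vec q k f = (\<Sum>(fi, b, a) \<leftarrow> ts. act (monom b (q ^ a)) (lt_vec q k fi)))"

definition minimal_wrt :: "nat \<Rightarrow> nat \<Rightarrow> 'a::field poly \<times> 'a poly \<Rightarrow> ('a poly \<times> 'a poly) set \<Rightarrow> bool" where
  "minimal_wrt q k f F \<longleftrightarrow> \<not> reduces q k f F"

definition generated :: "nat \<Rightarrow> ('a::field poly \<times> 'a poly) set \<Rightarrow> ('a poly \<times> 'a poly) set" where
  "generated q B = {\<Sum>b\<in>B. act (a b) b | a. \<forall>b\<in>B. a b \<in> Lq q}"

definition lin_indep_mod :: "nat \<Rightarrow> ('a::field poly \<times> 'a poly) set \<Rightarrow> bool" where
  "lin_indep_mod q B \<longleftrightarrow>
     (\<forall>a. (\<forall>b\<in>B. a b \<in> Lq q) \<longrightarrow> (\<Sum>b\<in>B. act (a b) b) = 0 \<longrightarrow> (\<forall>b\<in>B. a b = 0))"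

definition minimal_basis ::
  "nat \<Rightarrow> nat \<Rightarrow> ('a::field poly \<times> 'a poly) set \<Rightarrow> ('a poly \<times> 'a poly) set \<Rightarrow> bool" where
  "minimal_basis q k B M \<longleftrightarrow> finite B \<and> generated q B = M \<and> lin_indep_mod q B \<and>
     (\<forall>b\<in>B. minimal_wrt q k b (B - {b}))"

definition rdiv :: "nat \<Rightarrow> 'a::field poly \<Rightarrow> 'a poly \<Rightarrow> 'a poly \<times> 'a poly" where
  "rdiv q P N = (THE (qq, rr). qq \<in> Lq q \<and> rr \<in> Lq q \<and> P = pcompose qq N + rr \<and>
                    qdeg_e q rr < qdeg_e q N)"

definition alg2_cond :: "nat \<Rightarrow> nat \<Rightarrow> 'a::field poly \<times> 'a poly \<times> 'a poly \<times> 'a poly \<Rightarrow> bool" where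
  "alg2_cond q k s = (case s of (P, K, N, D) \<Rightarrow>
      qdeg_e q D + ereal (real (k - 1)) < qdeg_e q N)"

definition alg2_step :: "nat \<Rightarrow> 'a::field poly \<times> 'a poly \<times> 'a poly \<times> 'a poly \<Rightarrow>
    'a poly \<times> 'a poly \<times> 'a poly \<times> 'a poly" where
  "alg2_step q s = (case s of (P, K, N, D) \<Rightarrow>
      (case rdiv q P N of (qq, rr) \<Rightarrow> (N, D, rr, K - pcompose qq D)))"

definition alg2_init :: "'a::field poly \<Rightarrow> 'a poly \<Rightarrow> 'a poly \<times> 'a poly \<times> 'a poly \<times> 'a poly" where
  "alg2_init PP LL = (PP, 0, - LL, [:0, 1:])"

definition algorithm2 :: "nat \<Rightarrow> nat \<Rightarrow> 'a::field poly \<Rightarrow> 'a poly \<Rightarrow>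
    (('a poly \<times> 'a poly) \<times> ('a poly \<times> 'a poly)) option" where
  "algorithm2 q k PP LL = map_option (\<lambda>(P, K, N, D). ((P, K), (N, D)))
      (while_option (alg2_cond q k) (alg2_step q) (alg2_init PP LL))"

end

theory Submission
  imports Defs "HOL-Number_Theory.Residues"
begin

text \<open>
  Algorithm 2 is the Euclidean algorithm for right division in the ring of linearized
  polynomials under composition, run on the rows \<open>(\<Pi>, 0)\<close> and \<open>(-\<Lambda>, x)\<close> that generate the
  interpolation module by definition. Each step is an elementary row operation, so the two rows
  keep generating the module, while the \<open>q\<close>-degree of the remainder drops and the \<open>q\<close>-degrees
  of the four entries keep satisfying an invariant. When the loop stops, the invariant puts
  the leading monomial of the first row in position 1 and that of the second row in
  position 2. Comparing \<open>q\<close>-degrees in a relation between the rows then shows that they are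
  independent, and a leading monomial can never be reduced by one in the other position.
  The invariant holds initially because \<open>\<Pi>\<close> and \<open>\<Lambda>\<close> are linearized with
  \<open>qdeg \<Lambda> < qdeg \<Pi> = n\<close>: for \<open>\<Pi>\<close> this follows from the additivity of \<open>x \<mapsto> x\<^sup>q\<close> and
  the factorization of \<open>x\<^sup>q - x\<close> into the linear factors \<open>x - c\<close>, \<open>c \<in> \<bbbF>\<^sub>q\<close>; for \<open>\<Lambda>\<close>
  from a Laplace expansion along the only non-constant column.
\<close>

(* HOL-Algebra, imported by Residues, has its own monom and coeff of univariate polynomials. *)
hide_const (open) UnivPoly.monom UnivPoly.coeff

section \<open>Finite fields and polynomials\<close>

lemma field_power_card_eq_self:
  fixes x :: "'a::{finite,field}"
  shows "x ^ card (UNIV :: 'a set) = x"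
proof -
  let ?U = "UNIV - {0::'a}"
  have card_U: "card (UNIV :: 'a set) = Suc (card ?U)"
    using finite_UNIV_card_ge_0[where ?'a = 'a] by (simp add: card_Diff_singleton)
  show ?thesis
  proof (cases "x = 0")
    case True
    then show ?thesis
      by (simp only: card_U power_Suc mult_zero_left)
  next
    case False
    have "(\<Prod>y\<in>?U. x * y) = \<Prod>?U"
      by (rule prod.reindex_bij_witness[of _ "\<lambda>y. y / x" "\<lambda>y. x * y"]) (use False in auto)
    moreover have "\<Prod>?U \<noteq> 0"
      by simp
    ultimately have "x ^ card ?U = 1"
      by (simp add: prod.distrib)
    then show ?thesis
      by (simp only: card_U power_Suc mult_1_right)
  qed
qed

lemma CHAR_eq_prime_of_card:
  assumes "prime p" and "card (UNIV :: 'a::{finite,field} set) = p ^ n" and "n \<ge> 1"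
  shows "CHAR('a) = p"
proof -
  have "prime CHAR('a)"
    by (simp add: finite_imp_CHAR_pos prime_CHAR_semidom)
  moreover have "CHAR('a) dvd p ^ n"
    using CHAR_dvd_CARD[where 'a = 'a] assms(2) by simp
  ultimately show ?thesis
    using assms(1) prime_dvd_power primes_dvd_imp_eq by blast
qed

lemma
  assumes "n \<ge> 2"
  shows degree_monom_minus_X: "degree (monom (1::'b::field) n - [:0, 1:]) = n"
    and coeff_monom_minus_X: "coeff (monom (1::'b) n - [:0, 1:]) n = 1"
proof -
  show "coeff (monom (1::'b) n - [:0, 1:]) n = 1"
    using assms by (simp add: coeff_pCons split: nat.split)
  moreover have "degree (monom (1::'b) n - [:0, 1:]) \<le> n"
    using assms by (intro degree_diff_le) (auto simp: degree_monom_eq)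
  ultimately show "degree (monom (1::'b) n - [:0, 1:]) = n"
    by (metis antisym le_degree zero_neq_one)
qed

lemma pcompose_power: "pcompose (p ^ n) r = pcompose p r ^ n"
  by (induction n) (simp_all add: pcompose_1 pcompose_mult)

lemma pcompose_monom: "pcompose (monom c n) r = smult c (r ^ n)"
  by (simp add: monom_altdef pcompose_smult pcompose_power pcompose_pCons)

lemma det_const_mat:
  fixes A :: "'a::field poly mat"
  assumes "A \<in> carrier_mat n n" and "\<And>i j. i < n \<Longrightarrow> j < n \<Longrightarrow> degree (A $$ (i, j)) = 0"
  shows "det A = [:det (map_mat (\<lambda>x. coeff x 0) A):]"
proof -
  interpret const: comm_ring_hom "\<lambda>x::'a. [:x:]"
    by unfold_locales (auto simp: one_pCons)
  have "A = map_mat (\<lambda>x. [:x:]) (map_mat (\<lambda>x. coeff x 0) A)"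
    using assms by (intro eq_matI) (auto simp: degree_0_id)
  then show ?thesis
    by (metis const.hom_det)
qed

section \<open>Modules of pairs and the weighted term-over-position order\<close>

definition Lq_span2 :: "nat \<Rightarrow> 'a::field poly \<times> 'a poly \<Rightarrow> 'a poly \<times> 'a poly \<Rightarrow> ('a poly \<times> 'a poly) set" where
  "Lq_span2 q u v = {act a u + act b v | a b. a \<in> Lq q \<and> b \<in> Lq q}"

lemma generated_pair:
  assumes "u \<noteq> v"
  shows "generated q {u, v} = Lq_span2 q u v"
proof (intro equalityI subsetI)
  fix x assume "x \<in> generated q {u, v}"
  then obtain f where "f u \<in> Lq q" "f v \<in> Lq q" "x = act (f u) u + act (f v) v"
    unfolding generated_def using assms by auto
  then show "x \<in> Lq_span2 q u v"
    unfolding Lq_span2_def by blast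
next
  fix x assume "x \<in> Lq_span2 q u v"
  then obtain a b where "a \<in> Lq q" "b \<in> Lq q" "x = act a u + act b v"
    unfolding Lq_span2_def by blast
  moreover define f where "f = (\<lambda>w. if w = u then a else b)"
  ultimately have "(\<forall>w\<in>{u, v}. f w \<in> Lq q) \<and> x = (\<Sum>w\<in>{u, v}. act (f w) w)"
    using assms by simp
  then show "x \<in> generated q {u, v}"
    unfolding generated_def by blast
qed

lemma lin_indep_mod_pairI:
  assumes "u \<noteq> v"
    and "\<And>a b. a \<in> Lq q \<Longrightarrow> b \<in> Lq q \<Longrightarrow> act a u + act b v = 0 \<Longrightarrow> a = 0 \<and> b = 0"
  shows "lin_indep_mod q {u, v}"
  unfolding lin_indep_mod_def using assms by auto

lemma wtop_less_asym: "wtop_less k m m' \<Longrightarrow> \<not> wtop_less k m' m"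
  by (auto simp: wtop_less_def Let_def)

lemma lm_eqI:
  assumes "m \<in> mons q f" and "\<And>i j. (i, j) \<in> mons q f \<Longrightarrow> (i, j) \<noteq> m \<Longrightarrow> wtop_less k (i, j) m"
  shows "lm q k f = m"
  unfolding lm_def
proof (rule the_equality)
  show "m \<in> mons q f \<and> (\<forall>m'\<in>mons q f. m' \<noteq> m \<longrightarrow> wtop_less k m' m)"
    using assms by auto
next
  fix m' assume m': "m' \<in> mons q f \<and> (\<forall>m''\<in>mons q f. m'' \<noteq> m' \<longrightarrow> wtop_less k m'' m')"
  show "m' = m"
  proof (rule ccontr)
    assume "m' \<noteq> m"
    obtain i j where "m' = (i, j)"
      by fastforce
    then have "wtop_less k m m'" and "wtop_less k m' m"
      using m' assms \<open>m' \<noteq> m\<close> by auto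
    then show False
      using wtop_less_asym by blast
  qed
qed

lemma mons_iff: "(i, j) \<in> mons q (f1, f2) \<longleftrightarrow>
    (j = 1 \<and> coeff f1 (q ^ i) \<noteq> 0) \<or> (j = 2 \<and> coeff f2 (q ^ i) \<noteq> 0)"
  by (auto simp: mons_def comp_of_def)

section \<open>Linearized polynomials\<close>

locale Fqm_field =
  fixes q :: nat and field_type :: "'a::{finite,field} itself"
  assumes q_char_power: "\<exists>e\<ge>1. q = CHAR('a) ^ e"
    and card_q_power: "\<exists>m\<ge>1. card (UNIV :: 'a set) = q ^ m"
begin

lemma prime_CHAR: "prime CHAR('a)"
  by (simp add: finite_imp_CHAR_pos prime_CHAR_semidom)

lemma q_ge_2: "q \<ge> 2"
proof -
  obtain e where "e \<ge> 1" "q = CHAR('a) ^ e"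
    using q_char_power by blast
  moreover have "CHAR('a) \<ge> 2"
    using prime_CHAR by (rule prime_ge_2_nat)
  ultimately show ?thesis
    using self_le_power[of "CHAR('a)" e] by simp
qed

lemma q_pos [simp]: "q \<noteq> 0" "q > 0" "q ^ i > 0"
  using q_ge_2 by auto

lemma frobenius_add:
  fixes x y :: "'b::comm_semiring_1"
  assumes "CHAR('b) = CHAR('a)"
  shows "(x + y) ^ (q ^ i) = x ^ (q ^ i) + y ^ (q ^ i)"
proof -
  obtain e where "q = CHAR('a) ^ e"
    using q_char_power by blast
  hence "q ^ i = CHAR('b) ^ (e * i)"
    by (simp add: assms power_mult)
  moreover have "prime CHAR('b)"
    using prime_CHAR by (simp add: assms)
  ultimately show ?thesis
    by (intro freshmans_dream')
qed

lemma frobenius_diff: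
  fixes x y :: "'b::comm_ring_1"
  assumes "CHAR('b) = CHAR('a)"
  shows "(x - y) ^ (q ^ i) = x ^ (q ^ i) - y ^ (q ^ i)"
  using frobenius_add[OF assms, of "x - y" y i] by simp

lemmas frobenius_add_poly = frobenius_add[where 'b = "'a poly", OF semiring_char_poly]

lemmas frobenius_diff_poly = frobenius_diff[where 'b = "'a poly", OF semiring_char_poly]

lemma Fq_0: "0 \<in> (Fq q :: 'a set)"
  by (simp add: Fq_def)

lemma Fq_diff: "a \<in> Fq q \<Longrightarrow> b \<in> Fq q \<Longrightarrow> (a - b :: 'a) \<in> Fq q"
  using frobenius_diff[OF refl, of a b 1] by (simp add: Fq_def)

lemma Fq_power_q_power: "c \<in> Fq q \<Longrightarrow> (c :: 'a) ^ (q ^ j) = c"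
  by (induction j) (simp_all add: Fq_def power_mult flip: power_Suc2)

lemma Fq_eq_roots: "(Fq q :: 'a set) = {x. poly (monom 1 q - [:0, 1:]) x = 0}"
  by (simp add: Fq_def poly_monom)

lemma X_power_q_minus_X_dvd: "monom 1 q - [:0, 1:] dvd monom 1 (q ^ i) - [:0, 1::'a:]"
proof (induction i)
  case (Suc i)
  have "(monom 1 (q ^ i) - [:0, 1::'a:]) ^ (q ^ 1) = monom 1 (q ^ Suc i) - monom 1 q"
    by (simp only: frobenius_diff_poly monom_power) (simp add: monom_altdef mult.commute)
  hence split: "monom 1 (q ^ Suc i) - [:0, 1::'a:] = (monom 1 (q ^ i) - [:0, 1:]) ^ (q ^ 1) + (monom 1 q - [:0, 1:])"
    by simp
  have "monom 1 q - [:0, 1:] dvd (monom 1 (q ^ i) - [:0, 1::'a:]) ^ (q ^ 1)"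
    using Suc.IH by (rule dvd_trans) simp
  then show ?case
    unfolding split by (rule dvd_add) simp
qed (simp add: monom_Suc monom_0)

text \<open>The field has \<open>T = q\<^sup>m\<close> elements, all roots of \<open>X\<^sup>T - X\<close>; at most \<open>T - q\<close> of them
  are roots of the cofactor of \<open>X\<^sup>q - X\<close>.\<close>
lemma card_Fq: "card (Fq q :: 'a set) = q"
proof -
  obtain m where "m \<ge> 1" and card_UNIV: "card (UNIV :: 'a set) = q ^ m"
    using card_q_power by blast
  define T where "T = q ^ m"
  have "q \<le> T"
    using \<open>m \<ge> 1\<close> q_ge_2 self_le_power[of q m] by (simp add: T_def)
  obtain h where h: "monom 1 T - [:0, 1::'a:] = (monom 1 q - [:0, 1:]) * h"
    using X_power_q_minus_X_dvd[of m] by (auto simp: T_def)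
  have deg_T: "degree (monom 1 T - [:0, 1::'a:]) = T" and deg_q: "degree (monom 1 q - [:0, 1::'a:]) = q"
    using degree_monom_minus_X[of T] degree_monom_minus_X[of q] q_ge_2 \<open>q \<le> T\<close> by simp_all
  have "h \<noteq> 0"
    using h deg_T q_ge_2 \<open>q \<le> T\<close> by auto
  moreover have "monom 1 q - [:0, 1::'a:] \<noteq> 0"
    using deg_q q_ge_2 by auto
  ultimately have "degree h = T - q"
    using arg_cong[OF h, of degree] deg_T deg_q by (simp add: degree_mult_eq)
  have "UNIV \<subseteq> Fq q \<union> {x. poly h x = 0}"
  proof
    fix x :: 'a
    have "poly (monom 1 T - [:0, 1:]) x = 0"
      using field_power_card_eq_self[of x] by (simp add: card_UNIV T_def poly_monom)
    then show "x \<in> Fq q \<union> {x. poly h x = 0}"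
      unfolding Fq_eq_roots h by simp
  qed
  hence "T \<le> card (Fq q :: 'a set) + card {x. poly h x = 0}"
    by (metis T_def card_UNIV card_Un_le card_mono finite le_trans)
  moreover have "card {x. poly h x = 0} \<le> T - q"
    using card_poly_roots_bound[OF \<open>h \<noteq> 0\<close>] \<open>degree h = T - q\<close> by simp
  moreover have "card (Fq q :: 'a set) \<le> q"
    unfolding Fq_eq_roots using card_poly_roots_bound[of "monom 1 q - [:0, 1::'a:]"] deg_q q_ge_2
    by fastforce
  ultimately show ?thesis
    using \<open>q \<le> T\<close> by linarith
qed

lemma prod_Fq_linear_factors: "(\<Prod>c\<in>Fq q. [:-c, 1:]) = monom 1 q - [:0, 1::'a:]"
proof (rule ccontr)
  define F :: "'a poly" where "F = (\<Prod>c\<in>Fq q. [:-c, 1:])"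
  define G :: "'a poly" where "G = monom 1 q - [:0, 1:]"
  assume "F \<noteq> G"
  have "degree F = q"
    by (simp add: F_def degree_prod_eq_sum_degree card_Fq)
  moreover have "lead_coeff F = 1"
    unfolding F_def by (simp only: lead_coeff_prod) simp
  moreover have "degree G = q" and "coeff G q = 1"
    using degree_monom_minus_X coeff_monom_minus_X q_ge_2 by (simp_all add: G_def)
  ultimately have "coeff (F - G) q = 0" and "degree (F - G) \<le> q"
    by (simp_all add: degree_diff_le)
  hence "degree (F - G) < q"
    using \<open>F \<noteq> G\<close> by (metis le_neq_implies_less leading_coeff_0_iff right_minus_eq)
  moreover have "(Fq q :: 'a set) \<subseteq> {x. poly (F - G) x = 0}"
  proof
    fix x :: 'a
    assume "x \<in> Fq q"
    hence "poly F x = 0" and "poly G x = 0"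
      unfolding F_def G_def Fq_eq_roots by (auto simp: poly_prod prod_zero_iff simp del: poly_diff)
    then show "x \<in> {x. poly (F - G) x = 0}"
      by simp
  qed
  hence "q \<le> card {x. poly (F - G) x = 0}"
    using card_mono[OF poly_roots_finite[of "F - G"]] \<open>F \<noteq> G\<close> card_Fq by (metis right_minus_eq)
  ultimately show False
    using card_poly_roots_bound[of "F - G"] \<open>F \<noteq> G\<close> by simp
qed

lemma prod_Fq_shift: "(\<Prod>c\<in>Fq q. W - [:c:]) = W ^ q - (W :: 'a poly)"
proof -
  have "W - [:c:] = pcompose [:-c, 1:] W" for c
    by (simp add: pcompose_pCons poly_eq_iff coeff_pCons split: nat.split)
  hence "(\<Prod>c\<in>Fq q. W - [:c:]) = pcompose (\<Prod>c\<in>Fq q. [:-c, 1:]) W"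
    by (simp add: pcompose_prod)
  also have "\<dots> = W ^ q - W"
    by (simp add: prod_Fq_linear_factors pcompose_diff pcompose_monom pcompose_pCons)
  finally show ?thesis .
qed

abbreviation linearized :: "'a poly set" where
  "linearized \<equiv> Lq q"

lemma Lq_induct [consumes 1, case_names zero monom add]:
  assumes "f \<in> linearized" and "P 0" and "\<And>c j. P (monom c (q ^ j))"
    and "\<And>a b. P a \<Longrightarrow> P b \<Longrightarrow> P (a + b)"
  shows "P f"
proof -
  have "P (\<Sum>d\<in>A. monom (coeff f d) d)" if "finite A" for A
    using that
  proof (induction A rule: finite_induct)
    case (insert d A)
    have "P (monom (coeff f d) d)"
      using assms(1-3) by (cases "coeff f d = 0") (auto simp: Lq_def)
    then show ?case
      using insert assms(4) by simp
  qed (simp add: assms(2))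
  from this[of "{..degree f}"] show ?thesis
    by (simp add: poly_as_sum_of_monoms)
qed

lemma Lq_0 [simp]: "0 \<in> linearized"
  and Lq_monom [simp]: "monom c (q ^ j) \<in> linearized"
  and Lq_X [simp]: "[:0, 1:] \<in> linearized"
  by (auto simp: Lq_def coeff_pCons split: nat.splits intro: exI[of _ 0])

lemma Lq_add [simp]: "f \<in> linearized \<Longrightarrow> g \<in> linearized \<Longrightarrow> f + g \<in> linearized"
  and Lq_diff [simp]: "f \<in> linearized \<Longrightarrow> g \<in> linearized \<Longrightarrow> f - g \<in> linearized"
  and Lq_uminus [simp]: "f \<in> linearized \<Longrightarrow> - f \<in> linearized"
  and Lq_smult [simp]: "f \<in> linearized \<Longrightarrow> smult c f \<in> linearized"
  unfolding Lq_def by (auto; metis add_0 diff_0 diff_self)+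

lemma Lq_coeff_0: "f \<in> linearized \<Longrightarrow> coeff f 0 = 0"
proof (rule ccontr)
  assume "f \<in> linearized" and "coeff f 0 \<noteq> 0"
  then obtain j where "0 = q ^ j"
    unfolding Lq_def by blast
  then show False
    by simp
qed

lemma Lq_power_q_power: "f \<in> linearized \<Longrightarrow> f ^ (q ^ i) \<in> linearized"
proof (induction f rule: Lq_induct)
  case zero
  then show ?case by (simp add: zero_power)
next
  case (monom c j)
  then show ?case by (simp add: monom_power flip: power_add)
next
  case (add a b)
  then show ?case by (simp add: frobenius_add_poly)
qed

lemma Lq_pcompose [simp]: "f \<in> linearized \<Longrightarrow> g \<in> linearized \<Longrightarrow> pcompose f g \<in> linearized"
  by (induction f rule: Lq_induct) (simp_all add: pcompose_monom pcompose_add Lq_power_q_power)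

lemma pcompose_Lq_add: "h \<in> linearized \<Longrightarrow> pcompose h (a + b) = pcompose h a + pcompose h b"
  by (induction h rule: Lq_induct)
    (simp_all add: pcompose_monom frobenius_add_poly smult_add_right pcompose_add algebra_simps)

lemma pcompose_Lq_diff: "h \<in> linearized \<Longrightarrow> pcompose h (a - b) = pcompose h a - pcompose h b"
  by (induction h rule: Lq_induct)
    (simp_all add: pcompose_monom frobenius_diff_poly smult_diff_right pcompose_add algebra_simps)

lemma pcompose_Lq_0: "h \<in> linearized \<Longrightarrow> pcompose h 0 = 0"
  by (simp add: pcompose_0' Lq_coeff_0)

lemma poly_Lq_Fq_smult:
  assumes "h \<in> linearized" and "c \<in> Fq q"
  shows "poly h (c * a) = c * poly h a"
  using assms(1)
  by (induction h rule: Lq_induct)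
    (simp_all add: poly_monom power_mult_distrib Fq_power_q_power[OF assms(2)] algebra_simps)

lemma qdeg_eqI: "degree (f :: 'a poly) = q ^ i \<Longrightarrow> qdeg q f = i"
  unfolding qdeg_def using q_ge_2 by (intro the_equality) (auto simp: power_inject_exp)

lemma degree_Lq: "f \<in> linearized \<Longrightarrow> f \<noteq> 0 \<Longrightarrow> degree f = q ^ qdeg q f"
proof -
  assume "f \<in> linearized" "f \<noteq> 0"
  then have "coeff f (degree f) \<noteq> 0"
    by simp
  then obtain j where "degree f = q ^ j"
    using \<open>f \<in> linearized\<close> unfolding Lq_def by blast
  then show ?thesis
    using qdeg_eqI by simp
qed

lemma degree_Lq_pos: "f \<in> linearized \<Longrightarrow> f \<noteq> 0 \<Longrightarrow> degree f > 0"
  using degree_Lq by simp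

lemma coeff_q_power_qdeg_nonzero: "f \<in> linearized \<Longrightarrow> f \<noteq> 0 \<Longrightarrow> coeff f (q ^ qdeg q f) \<noteq> 0"
  using degree_Lq by (metis leading_coeff_0_iff)

lemma coeff_nonzero_imp_le_qdeg: "f \<in> linearized \<Longrightarrow> coeff f (q ^ i) \<noteq> 0 \<Longrightarrow> i \<le> qdeg q f"
proof -
  assume "f \<in> linearized" "coeff f (q ^ i) \<noteq> 0"
  then have "q ^ i \<le> q ^ qdeg q f"
    using le_degree degree_Lq by fastforce
  then show ?thesis
    using q_ge_2 by simp
qed

lemma degree_less_iff_qdeg_less:
  assumes "f \<in> linearized" "g \<in> linearized" "f \<noteq> 0" "g \<noteq> 0"
  shows "degree f < degree g \<longleftrightarrow> qdeg q f < qdeg q g"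
  using assms q_ge_2 by (simp add: degree_Lq power_strict_increasing_iff)

lemma qdeg_pcompose:
  assumes "a \<in> linearized" "b \<in> linearized" "a \<noteq> 0" "b \<noteq> 0"
  shows "pcompose a b \<noteq> 0" and "qdeg q (pcompose a b) = qdeg q a + qdeg q b"
proof -
  show "pcompose a b \<noteq> 0"
    using assms pcompose_eq_0 degree_Lq_pos by blast
  have "degree (pcompose a b) = q ^ (qdeg q a + qdeg q b)"
    using assms by (simp add: degree_pcompose degree_Lq power_add)
  then show "qdeg q (pcompose a b) = qdeg q a + qdeg q b"
    by (rule qdeg_eqI)
qed

lemma qdeg_add_lower:
  assumes "f \<in> linearized" "g \<in> linearized" "f \<noteq> 0" "g = 0 \<or> qdeg q g < qdeg q f"
  shows "f + g \<noteq> 0" and "qdeg q (f + g) = qdeg q f"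
proof -
  have "degree g < degree f"
    using assms degree_Lq_pos degree_less_iff_qdeg_less by fastforce
  hence "degree (f + g) = degree f"
    by (rule degree_add_eq_left)
  then show "f + g \<noteq> 0" and "qdeg q (f + g) = qdeg q f"
    using assms degree_Lq_pos degree_Lq qdeg_eqI by (metis less_irrefl degree_0)+
qed

lemma qdeg_uminus [simp]: "qdeg q (- f :: 'a poly) = qdeg q f"
  by (simp add: qdeg_def)

lemma qdeg_e_lessD:
  assumes "f \<in> linearized" "N \<in> linearized" "N \<noteq> 0" "qdeg_e q f < qdeg_e q N"
  shows "f = 0 \<or> qdeg q f < qdeg q N" and "degree f < degree N"
proof -
  show *: "f = 0 \<or> qdeg q f < qdeg q N"
    using assms(3,4) by (auto simp: qdeg_e_def split: if_splits)
  then show "degree f < degree N"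
    using assms degree_Lq_pos degree_less_iff_qdeg_less by fastforce
qed

lemma qdeg_e_lessI: "N \<noteq> 0 \<Longrightarrow> f = 0 \<or> qdeg q f < qdeg q N \<Longrightarrow> qdeg_e q f < qdeg_e q N"
  by (auto simp: qdeg_e_def)

section \<open>Right division and Algorithm 2\<close>

lemma Lq_cancel_leading_term:
  assumes "P \<in> linearized" "N \<in> linearized" "P \<noteq> 0" "N \<noteq> 0" "qdeg q N \<le> qdeg q P"
  obtains t where "t \<in> linearized" and "degree (P - pcompose t N) < degree P"
proof -
  define s where "s = qdeg q P - qdeg q N"
  define t where "t = monom (lead_coeff P / lead_coeff N ^ (q ^ s)) (q ^ s)"
  have T: "pcompose t N = smult (lead_coeff P / lead_coeff N ^ (q ^ s)) (N ^ (q ^ s))"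
    by (simp add: t_def pcompose_monom)
  have "lead_coeff P \<noteq> 0" and "lead_coeff N \<noteq> 0"
    using assms by simp_all
  then have "degree (pcompose t N) = degree P"
    using assms by (simp add: T degree_power_eq degree_Lq s_def flip: power_add)
  moreover have "lead_coeff (pcompose t N) = lead_coeff P"
    using \<open>lead_coeff N \<noteq> 0\<close> by (simp add: T lead_coeff_power)
  ultimately have coeff_0: "coeff (P - pcompose t N) (degree P) = 0"
    and "degree (P - pcompose t N) \<le> degree P"
    by (simp_all add: degree_diff_le)
  moreover have "degree (P - pcompose t N) \<noteq> degree P"
  proof
    assume deg: "degree (P - pcompose t N) = degree P"
    then have "P - pcompose t N = 0"
      using coeff_0 leading_coeff_0_iff by metis
    then show False
      using deg degree_Lq_pos[OF assms(1,3)] by simp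
  qed
  ultimately show ?thesis
    using that[of t] by (simp add: t_def)
qed

lemma rdiv_exists:
  assumes "P \<in> linearized" "N \<in> linearized" "N \<noteq> 0"
  shows "\<exists>a r. a \<in> linearized \<and> r \<in> linearized \<and> P = pcompose a N + r \<and> qdeg_e q r < qdeg_e q N"
  using assms(1)
proof (induction "degree P" arbitrary: P rule: less_induct)
  case less
  show ?case
  proof (cases "P = 0 \<or> qdeg q P < qdeg q N")
    case True
    then show ?thesis
      using less.prems assms by (intro exI[of _ 0] exI[of _ P]) (auto intro: qdeg_e_lessI)
  next
    case False
    then obtain t where t: "t \<in> linearized" "degree (P - pcompose t N) < degree P"
      using Lq_cancel_leading_term less.prems assms by (metis not_le)
    then obtain a r where "a \<in> linearized" "r \<in> linearized" "qdeg_e q r < qdeg_e q N"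
      and "P - pcompose t N = pcompose a N + r"
      using less.hyps less.prems assms by (metis Lq_diff Lq_pcompose)
    then show ?thesis
      using t(1) by (intro exI[of _ "a + t"] exI[of _ r]) (auto simp: pcompose_add algebra_simps)
  qed
qed

lemma rdiv_unique:
  assumes "N \<in> linearized" "N \<noteq> 0"
    and "a \<in> linearized" "r \<in> linearized" "pcompose a N + r = pcompose a' N + r'" "qdeg_e q r < qdeg_e q N"
    and "a' \<in> linearized" "r' \<in> linearized" "qdeg_e q r' < qdeg_e q N"
  shows "a = a'"
proof (rule ccontr)
  assume "a \<noteq> a'"
  have "pcompose (a - a') N = r' - r"
    using assms(5) by (simp add: pcompose_diff algebra_simps)
  moreover have "degree N \<le> degree (pcompose (a - a') N)"
    using \<open>a \<noteq> a'\<close> assms degree_Lq_pos[of "a - a'"] by (simp add: degree_pcompose)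
  moreover have "degree (r' - r) < degree N"
    using qdeg_e_lessD(2) assms by (meson degree_diff_less)
  ultimately show False
    by simp
qed

lemma rdiv_correct:
  assumes "P \<in> linearized" "N \<in> linearized" "N \<noteq> 0" "rdiv q P N = (a, r)"
  shows "a \<in> linearized" "r \<in> linearized" "P = pcompose a N + r" "qdeg_e q r < qdeg_e q N"
proof -
  let ?R = "\<lambda>(a, r). a \<in> linearized \<and> r \<in> linearized \<and> P = pcompose a N + r \<and> qdeg_e q r < qdeg_e q N"
  have "\<exists>!x. ?R x"
    using rdiv_exists[OF assms(1-3)] rdiv_unique[OF assms(2,3)] by (fastforce simp: split_beta)
  then have "?R (rdiv q P N)"
    unfolding rdiv_def by (rule theI')
  then show "a \<in> linearized" "r \<in> linearized" "P = pcompose a N + r" "qdeg_e q r < qdeg_e q N"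
    using assms(4) by simp_all
qed

lemma rdiv_quotient:
  assumes "P \<in> linearized" "N \<in> linearized" "N \<noteq> 0" "P \<noteq> 0" "qdeg q N < qdeg q P"
    and "rdiv q P N = (a, r)"
  shows "a \<noteq> 0" and "qdeg q a + qdeg q N = qdeg q P"
proof -
  note div = rdiv_correct[OF assms(1-3,6)]
  have r_small: "r = 0 \<or> qdeg q r < qdeg q N"
    using qdeg_e_lessD(1)[OF div(2) assms(2,3) div(4)] .
  show "a \<noteq> 0"
  proof
    assume "a = 0"
    then have "P = r"
      using div(3) by simp
    then show False
      using r_small assms(4,5) by auto
  qed
  then have "pcompose a N \<noteq> 0" and "qdeg q (pcompose a N) = qdeg q a + qdeg q N"
    using qdeg_pcompose div(1) assms(2,3) by auto
  moreover have "qdeg q (pcompose a N + r) = qdeg q (pcompose a N)"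
    using calculation r_small div(1,2) assms(2) by (intro qdeg_add_lower(2)) auto
  ultimately show "qdeg q a + qdeg q N = qdeg q P"
    using div(3) by simp
qed

lemma act_add_left: "act (a + b) v = act a v + act b v"
  by (simp add: act_def pcompose_add)

lemma act_diff_left: "act (a - b) v = act a v - act b v"
  by (simp add: act_def pcompose_diff)

lemma act_act: "act a (act b v) = act (pcompose a b) v"
  by (simp add: act_def pcompose_assoc)

lemma act_diff_right: "a \<in> linearized \<Longrightarrow> act a (u - v) = act a u - act a v"
  by (simp add: act_def pcompose_Lq_diff)

lemma Lq_span2_row_operation:
  assumes "c \<in> linearized"
  shows "Lq_span2 q u v = Lq_span2 q v (u - act c v)"
proof (intro equalityI subsetI)
  fix x assume "x \<in> Lq_span2 q u v"
  then obtain a b where "a \<in> linearized" "b \<in> linearized" "x = act a u + act b v"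
    unfolding Lq_span2_def by blast
  moreover have "act a u + act b v = act (pcompose a c + b) v + act a (u - act c v)"
    using \<open>a \<in> linearized\<close> by (simp add: act_diff_right act_act act_add_left)
  ultimately show "x \<in> Lq_span2 q v (u - act c v)"
    using assms unfolding Lq_span2_def by fastforce
next
  fix x assume "x \<in> Lq_span2 q v (u - act c v)"
  then obtain a b where "a \<in> linearized" "b \<in> linearized" "x = act a v + act b (u - act c v)"
    unfolding Lq_span2_def by blast
  moreover have "act a v + act b (u - act c v) = act b u + act (a - pcompose b c) v"
    using \<open>b \<in> linearized\<close> by (simp add: act_diff_right act_act act_diff_left)
  ultimately show "x \<in> Lq_span2 q u v"
    using assms unfolding Lq_span2_def by fastforce
qed

definition alg2_invariant ::
  "nat \<Rightarrow> ('a poly \<times> 'a poly) set \<Rightarrow> 'a poly \<times> 'a poly \<times> 'a poly \<times> 'a poly \<Rightarrow> bool" where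
  "alg2_invariant k M = (\<lambda>(P, K, N, D).
     P \<in> linearized \<and> K \<in> linearized \<and> N \<in> linearized \<and> D \<in> linearized \<and> P \<noteq> 0 \<and> D \<noteq> 0 \<and>
     (K = 0 \<or> qdeg q K + (k - 1) < qdeg q P) \<and> (K = 0 \<or> qdeg q K < qdeg q D) \<and>
     (N = 0 \<or> qdeg q N < qdeg q P) \<and> Lq_span2 q (P, K) (N, D) = M)"

lemma alg2_cond_iff:
  "D \<noteq> 0 \<Longrightarrow> alg2_cond q k (P, K, N, D) \<longleftrightarrow> N \<noteq> 0 \<and> qdeg q D + (k - 1) < qdeg q N"
  by (auto simp: alg2_cond_def qdeg_e_def)

lemma alg2_step_invariant:
  assumes inv: "alg2_invariant k M (P, K, N, D)" and cond: "alg2_cond q k (P, K, N, D)"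
    and next_state: "alg2_step q (P, K, N, D) = (P', K', N', D')"
  shows "alg2_invariant k M (P', K', N', D')" and "degree N' < degree N"
proof -
  have L: "P \<in> linearized" "K \<in> linearized" "N \<in> linearized" "D \<in> linearized"
    and "P \<noteq> 0" "D \<noteq> 0" and K_small: "K = 0 \<or> qdeg q K < qdeg q D"
    and "N = 0 \<or> qdeg q N < qdeg q P" and span: "Lq_span2 q (P, K) (N, D) = M"
    using inv by (simp_all add: alg2_invariant_def)
  then have "N \<noteq> 0" and DN: "qdeg q D + (k - 1) < qdeg q N" and "qdeg q N < qdeg q P"
    using cond by (auto simp: alg2_cond_iff)
  obtain a r where ar: "rdiv q P N = (a, r)"
    by fastforce
  note div = rdiv_correct[OF L(1,3) \<open>N \<noteq> 0\<close> ar]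
  note quot = rdiv_quotient[OF L(1,3) \<open>N \<noteq> 0\<close> \<open>P \<noteq> 0\<close> \<open>qdeg q N < qdeg q P\<close> ar]
  have step: "(P', K', N', D') = (N, D, r, K - pcompose a D)"
    using next_state by (simp add: alg2_step_def ar) blast
  have "pcompose a D \<noteq> 0" and aD: "qdeg q (pcompose a D) = qdeg q a + qdeg q D"
    using qdeg_pcompose[OF div(1) L(4) quot(1) \<open>D \<noteq> 0\<close>] by auto
  moreover have "qdeg q a \<ge> 1"
    using quot(2) \<open>qdeg q N < qdeg q P\<close> by simp
  ultimately have "- pcompose a D + K \<noteq> 0" and "qdeg q (- pcompose a D + K) = qdeg q (pcompose a D)"
    using qdeg_add_lower[of "- pcompose a D" K] div(1) L K_small by auto
  then have "K - pcompose a D \<noteq> 0" and "qdeg q D < qdeg q (K - pcompose a D)"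
    using aD \<open>qdeg q a \<ge> 1\<close> by (simp_all add: add.commute)
  moreover have "Lq_span2 q (N, D) (r, K - pcompose a D) = M"
  proof -
    have "(r, K - pcompose a D) = (P, K) - act a (N, D)"
      using div(3) by (simp add: act_def)
    then show ?thesis
      using Lq_span2_row_operation[OF div(1), of "(P, K)" "(N, D)"] span by simp
  qed
  moreover have "r = 0 \<or> qdeg q r < qdeg q N"
    using qdeg_e_lessD(1)[OF div(2) L(3) \<open>N \<noteq> 0\<close> div(4)] .
  ultimately show "alg2_invariant k M (P', K', N', D')"
    using L div(1,2) \<open>N \<noteq> 0\<close> \<open>D \<noteq> 0\<close> DN step by (simp add: alg2_invariant_def)
  show "degree N' < degree N"
    using qdeg_e_lessD(2)[OF div(2) L(3) \<open>N \<noteq> 0\<close> div(4)] step by simp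
qed

lemma alg2_terminates:
  assumes "alg2_invariant k M s"
  obtains P K N D where "while_option (alg2_cond q k) (alg2_step q) s = Some (P, K, N, D)"
    and "alg2_invariant k M (P, K, N, D)" and "\<not> alg2_cond q k (P, K, N, D)"
proof -
  let ?N_degree = "\<lambda>(P :: 'a poly, K :: 'a poly, N :: 'a poly, D :: 'a poly). degree N"
  have step: "alg2_invariant k M (alg2_step q s') \<and> ?N_degree (alg2_step q s') < ?N_degree s'"
    if "alg2_invariant k M s'" "alg2_cond q k s'" for s'
    using alg2_step_invariant that by (cases s', cases "alg2_step q s'") auto
  obtain t where t: "while_option (alg2_cond q k) (alg2_step q) s = Some t"
    using measure_while_option_Some[of "alg2_invariant k M" "alg2_cond q k" "alg2_step q" ?N_degree s]
      step assms by blast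
  moreover have "alg2_invariant k M t"
    using while_option_rule[of "alg2_invariant k M" "alg2_cond q k" "alg2_step q" s t] step t assms by blast
  moreover have "\<not> alg2_cond q k t"
    using while_option_stop[OF t] .
  ultimately show ?thesis
    using that by (cases t) auto
qed

section \<open>The output is a minimal basis\<close>

lemma lm_first_position:
  assumes "f1 \<in> linearized" "f2 \<in> linearized" "f1 \<noteq> 0" "f2 = 0 \<or> qdeg q f2 + (k - 1) < qdeg q f1"
  shows "lm q k (f1, f2) = (qdeg q f1, 1)"
proof (rule lm_eqI)
  show "(qdeg q f1, 1) \<in> mons q (f1, f2)"
    using coeff_q_power_qdeg_nonzero assms by (simp add: mons_iff)
next
  fix i j assume "(i, j) \<in> mons q (f1, f2)" "(i, j) \<noteq> (qdeg q f1, 1)"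
  then consider "j = 1" "coeff f1 (q ^ i) \<noteq> 0" "i \<noteq> qdeg q f1" | "j = 2" "coeff f2 (q ^ i) \<noteq> 0"
    by (auto simp: mons_iff)
  then show "wtop_less k (i, j) (qdeg q f1, 1)"
  proof cases
    case 1
    then show ?thesis
      using coeff_nonzero_imp_le_qdeg[OF assms(1)] by (fastforce simp: wtop_less_def)
  next
    case 2
    then show ?thesis
      using coeff_nonzero_imp_le_qdeg[OF assms(2)] assms(4) by (fastforce simp: wtop_less_def)
  qed
qed

lemma lm_second_position:
  assumes "f1 \<in> linearized" "f2 \<in> linearized" "f2 \<noteq> 0" "f1 = 0 \<or> qdeg q f1 \<le> qdeg q f2 + (k - 1)"
  shows "lm q k (f1, f2) = (qdeg q f2, 2)"
proof (rule lm_eqI)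
  show "(qdeg q f2, 2) \<in> mons q (f1, f2)"
    using coeff_q_power_qdeg_nonzero assms by (simp add: mons_iff)
next
  fix i j assume "(i, j) \<in> mons q (f1, f2)" "(i, j) \<noteq> (qdeg q f2, 2)"
  then consider "j = 1" "coeff f1 (q ^ i) \<noteq> 0" | "j = 2" "coeff f2 (q ^ i) \<noteq> 0" "i \<noteq> qdeg q f2"
    by (auto simp: mons_iff)
  then show "wtop_less k (i, j) (qdeg q f2, 2)"
  proof cases
    case 1
    then show ?thesis
      using coeff_nonzero_imp_le_qdeg[OF assms(1)] assms(4) by (fastforce simp: wtop_less_def)
  next
    case 2
    then show ?thesis
      using coeff_nonzero_imp_le_qdeg[OF assms(2)] by (fastforce simp: wtop_less_def)
  qed
qed

lemma not_reduces_across_positions: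
  fixes f :: "'a poly \<times> 'a poly"
  assumes "lm q k f \<in> mons q f" and "\<And>g. g \<in> F \<Longrightarrow> (lpos q k g = 1) \<noteq> (lpos q k f = 1)"
  shows "\<not> reduces q k f F"
proof
  assume "reduces q k f F"
  then obtain ts :: "(('a poly \<times> 'a poly) \<times> 'a \<times> nat) list" where
    ts: "\<forall>(g, b, a) \<in> set ts. g \<in> F \<and> lm_vec q k f = act (monom 1 (q ^ a)) (lm_vec q k g)"
    and lt: "lt_vec q k f = (\<Sum>(g, b, a) \<leftarrow> ts. act (monom b (q ^ a)) (lt_vec q k g))"
    unfolding reduces_def by blast
  have act_0: "pcompose (monom (1::'a) (q ^ a)) 0 = 0" for a
    by (simp add: pcompose_0')
  have "ts = []"
  proof (rule ccontr)
    assume "ts \<noteq> []"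
    then obtain x where "x \<in> set ts"
      by (cases ts) auto
    moreover obtain g b a where "x = (g, b, a)"
      by (cases x) auto
    ultimately have "(g, b, a) \<in> set ts"
      by simp
    then have "g \<in> F" and "lm_vec q k f = act (monom 1 (q ^ a)) (lm_vec q k g)"
      using ts by auto
    then show False
      using assms(2)[OF \<open>g \<in> F\<close>]
      by (auto simp: lm_vec_def term_vec_def lpos_def act_def act_0 split: if_splits)
  qed
  then have "lt_vec q k f = 0"
    using lt by simp
  moreover obtain i j where "lm q k f = (i, j)" "coeff (comp_of j f) (q ^ i) \<noteq> 0"
    using assms(1) by (auto simp: mons_def)
  ultimately show False
    by (auto simp: lt_vec_def term_vec_def Let_def prod_eq_iff split: if_splits)
qed

lemma Lq_pair_independent:
  assumes L: "P \<in> linearized" "K \<in> linearized" "N \<in> linearized" "D \<in> linearized"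
    and "a \<in> linearized" "b \<in> linearized" "P \<noteq> 0" "D \<noteq> 0"
    and KP: "K = 0 \<or> qdeg q K + (k - 1) < qdeg q P" and ND: "N = 0 \<or> qdeg q N \<le> qdeg q D + (k - 1)"
    and "act a (P, K) + act b (N, D) = 0"
  shows "a = 0 \<and> b = 0"
proof (cases "a = 0")
  case True
  then have "pcompose b D = 0"
    using assms(11) by (simp add: act_def prod_eq_iff)
  then show ?thesis
    using True pcompose_eq_0 degree_Lq_pos[OF L(4) \<open>D \<noteq> 0\<close>] by blast
next
  case False
  have aP: "pcompose a P = - pcompose b N" and aK: "pcompose a K = - pcompose b D"
    using assms(11) by (simp_all add: act_def prod_eq_iff eq_neg_iff_add_eq_0)
  have "pcompose a P \<noteq> 0"
    using qdeg_pcompose False assms by blast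
  then have "b \<noteq> 0" and "N \<noteq> 0"
    using aP pcompose_Lq_0[OF \<open>b \<in> linearized\<close>] by auto
  then have "pcompose b D \<noteq> 0"
    using qdeg_pcompose assms by blast
  then have "K \<noteq> 0"
    using aK pcompose_Lq_0[OF \<open>a \<in> linearized\<close>] by auto
  have "qdeg q a + qdeg q P = qdeg q b + qdeg q N"
    using arg_cong[OF aP, of "qdeg q"] qdeg_pcompose(2) False \<open>b \<noteq> 0\<close> \<open>N \<noteq> 0\<close> assms by simp
  moreover have "qdeg q a + qdeg q K = qdeg q b + qdeg q D"
    using arg_cong[OF aK, of "qdeg q"] qdeg_pcompose(2) False \<open>b \<noteq> 0\<close> \<open>K \<noteq> 0\<close> assms by simp
  ultimately show ?thesis
    using KP ND \<open>K \<noteq> 0\<close> \<open>N \<noteq> 0\<close> by linarith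
qed

lemma alg2_final_state_minimal_basis:
  assumes inv: "alg2_invariant k M (P, K, N, D)" and stop: "\<not> alg2_cond q k (P, K, N, D)"
  shows "minimal_basis q k {(P, K), (N, D)} M" and "lpos q k (P, K) = 1" and "lpos q k (N, D) = 2"
proof -
  have L: "P \<in> linearized" "K \<in> linearized" "N \<in> linearized" "D \<in> linearized"
    and "P \<noteq> 0" "D \<noteq> 0" and KP: "K = 0 \<or> qdeg q K + (k - 1) < qdeg q P"
    and span: "Lq_span2 q (P, K) (N, D) = M"
    using inv by (simp_all add: alg2_invariant_def)
  have ND: "N = 0 \<or> qdeg q N \<le> qdeg q D + (k - 1)"
    using stop \<open>D \<noteq> 0\<close> by (auto simp: alg2_cond_iff)
  have lm1: "lm q k (P, K) = (qdeg q P, 1)"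
    using lm_first_position[OF L(1,2) \<open>P \<noteq> 0\<close> KP] .
  have lm2: "lm q k (N, D) = (qdeg q D, 2)"
    using lm_second_position[OF L(3,4) \<open>D \<noteq> 0\<close> ND] .
  have "(P, K) \<noteq> (N, D)"
    using lm1 lm2 by auto
  moreover have "lin_indep_mod q {(P, K), (N, D)}"
    using Lq_pair_independent[OF L _ _ \<open>P \<noteq> 0\<close> \<open>D \<noteq> 0\<close> KP ND] \<open>(P, K) \<noteq> (N, D)\<close>
    by (intro lin_indep_mod_pairI)
  moreover have "\<not> reduces q k (P, K) {(N, D)}" and "\<not> reduces q k (N, D) {(P, K)}"
    by (rule not_reduces_across_positions;
        simp add: lm1 lm2 lpos_def mons_iff coeff_q_power_qdeg_nonzero L \<open>P \<noteq> 0\<close> \<open>D \<noteq> 0\<close>)+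
  moreover have "{(P, K), (N, D)} - {(P, K)} = {(N, D)}" and "{(P, K), (N, D)} - {(N, D)} = {(P, K)}"
    using \<open>(P, K) \<noteq> (N, D)\<close> by auto
  ultimately show "minimal_basis q k {(P, K), (N, D)} M"
    using span generated_pair[OF \<open>(P, K) \<noteq> (N, D)\<close>] by (simp add: minimal_basis_def minimal_wrt_def)
  show "lpos q k (P, K) = 1" and "lpos q k (N, D) = 2"
    using lm1 lm2 by (simp_all add: lpos_def)
qed

lemma algorithm2_minimal_basis:
  assumes "PP \<in> linearized" "PP \<noteq> 0" "LL \<in> linearized" "LL = 0 \<or> qdeg q LL < qdeg q PP"
  shows "\<exists>b1 b2. algorithm2 q k PP LL = Some (b1, b2) \<and>
           minimal_basis q k {b1, b2} (Lq_span2 q (PP, 0) (- LL, [:0, 1:])) \<and>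
           lpos q k b1 = 1 \<and> lpos q k b2 = 2"
proof -
  have "alg2_invariant k (Lq_span2 q (PP, 0) (- LL, [:0, 1:])) (alg2_init PP LL)"
    using assms by (auto simp: alg2_invariant_def alg2_init_def)
  then obtain P K N D
    where "while_option (alg2_cond q k) (alg2_step q) (alg2_init PP LL) = Some (P, K, N, D)"
      and "alg2_invariant k (Lq_span2 q (PP, 0) (- LL, [:0, 1:])) (P, K, N, D)"
      and "\<not> alg2_cond q k (P, K, N, D)"
    by (rule alg2_terminates)
  then show ?thesis
    using alg2_final_state_minimal_basis by (auto simp: algorithm2_def)
qed

section \<open>The polynomials \<open>\<Pi>\<close> and \<open>\<Lambda>\<close>\<close>

lemma lin_indep_Fq_prefix:
  assumes "lin_indep_Fq q n (g :: nat \<Rightarrow> 'a)" "s \<le> n"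
  shows "lin_indep_Fq q s g"
  unfolding lin_indep_Fq_def
proof (intro allI impI)
  fix c :: "nat \<Rightarrow> 'a" and i
  assume c: "\<forall>i<s. c i \<in> Fq q" "(\<Sum>i<s. c i * g i) = 0" and "i < s"
  define c' where "c' i = (if i < s then c i else 0)" for i
  have "(\<Sum>i<n. c' i * g i) = (\<Sum>i<s. c i * g i)"
    using assms(2) by (intro sum.mono_neutral_cong_right) (simp_all add: c'_def)
  moreover have "\<forall>i<n. c' i \<in> Fq q"
    using c(1) Fq_0 by (simp add: c'_def)
  ultimately have "\<forall>i<n. c' i = 0"
    using assms(1) c(2) unfolding lin_indep_Fq_def by simp
  then have "c' i = 0"
    using \<open>i < s\<close> assms(2) by simp
  then show "c i = 0"
    using \<open>i < s\<close> by (simp add: c'_def)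
qed

lemma span_Fq_0: "span_Fq q 0 (g :: nat \<Rightarrow> 'a) = {0}"
  by (auto simp: span_Fq_def)

lemma span_Fq_Suc:
  "span_Fq q (Suc s) (g :: nat \<Rightarrow> 'a) = (\<Union>c\<in>Fq q. (\<lambda>v. v + c * g s) ` span_Fq q s g)"
proof (intro equalityI subsetI)
  fix x assume "x \<in> span_Fq q (Suc s) g"
  then obtain c where c: "\<forall>i<Suc s. c i \<in> Fq q" "x = (\<Sum>i<s. c i * g i) + c s * g s"
    unfolding span_Fq_def by auto
  then have "(\<Sum>i<s. c i * g i) \<in> span_Fq q s g"
    unfolding span_Fq_def by auto
  then show "x \<in> (\<Union>c\<in>Fq q. (\<lambda>v. v + c * g s) ` span_Fq q s g)"
    using c by auto
next
  fix x assume "x \<in> (\<Union>c\<in>Fq q. (\<lambda>v. v + c * g s) ` span_Fq q s g)"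
  then obtain c d where "c \<in> Fq q" "\<forall>i<s. d i \<in> Fq q" "x = (\<Sum>i<s. d i * g i) + c * g s"
    unfolding span_Fq_def by auto
  then have "(\<forall>i<Suc s. (d(s := c)) i \<in> Fq q) \<and> x = (\<Sum>i<Suc s. (d(s := c)) i * g i)"
    by (auto simp: less_Suc_eq)
  then show "x \<in> span_Fq q (Suc s) g"
    unfolding span_Fq_def by blast
qed

lemma span_Fq_translates_disjoint:
  assumes "lin_indep_Fq q (Suc s) (g :: nat \<Rightarrow> 'a)" "c \<in> Fq q" "c' \<in> Fq q" "c \<noteq> c'"
  shows "(\<lambda>v. v + c * g s) ` span_Fq q s g \<inter> (\<lambda>v. v + c' * g s) ` span_Fq q s g = {}"
proof (rule ccontr)
  assume "(\<lambda>v. v + c * g s) ` span_Fq q s g \<inter> (\<lambda>v. v + c' * g s) ` span_Fq q s g \<noteq> {}"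
  then obtain d d' where d: "\<forall>i<s. d i \<in> Fq q" "\<forall>i<s. d' i \<in> Fq q"
    and eq: "(\<Sum>i<s. d i * g i) + c * g s = (\<Sum>i<s. d' i * g i) + c' * g s"
    unfolding span_Fq_def by auto
  define e where "e i = (if i < s then d i - d' i else c - c')" for i
  have "\<forall>i<Suc s. e i \<in> Fq q"
    using d assms(2,3) by (auto simp: e_def less_Suc_eq Fq_diff)
  moreover have "(\<Sum>i<Suc s. e i * g i) = 0"
    using eq by (simp add: e_def sum_subtractf algebra_simps)
  ultimately have "e s = 0"
    using assms(1) unfolding lin_indep_Fq_def by blast
  then show False
    using assms(4) by (simp add: e_def)
qed

lemma Pi_g_Suc:
  assumes "lin_indep_Fq q (Suc s) (g :: nat \<Rightarrow> 'a)"
  shows "Pi_g q (Suc s) g = (\<Prod>c\<in>Fq q. pcompose (Pi_g q s g) [:-(c * g s), 1:])"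
proof -
  have "Pi_g q (Suc s) g = (\<Prod>c\<in>Fq q. \<Prod>u\<in>(\<lambda>v. v + c * g s) ` span_Fq q s g. [:-u, 1:])"
    unfolding Pi_g_def span_Fq_Suc
    using span_Fq_translates_disjoint[OF assms] by (intro prod.UNION_disjoint) auto
  also have "\<dots> = (\<Prod>c\<in>Fq q. \<Prod>v\<in>span_Fq q s g. [:-(v + c * g s), 1:])"
    by (rule prod.cong[OF refl], subst prod.reindex) (auto simp: inj_on_def)
  also have "\<dots> = (\<Prod>c\<in>Fq q. pcompose (Pi_g q s g) [:-(c * g s), 1:])"
    by (simp add: Pi_g_def pcompose_prod pcompose_pCons algebra_simps)
  finally show ?thesis .
qed

lemma pcompose_Lq_shift:
  assumes "Y \<in> linearized"
  shows "pcompose Y [:-a, 1:] = Y + [:poly Y (-a):]"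
proof -
  have "pcompose Y [:-a, 1:] = pcompose Y ([:0, 1:] + [:-a:])"
    by simp
  also have "\<dots> = Y + [:poly Y (-a):]"
    by (simp only: pcompose_Lq_add[OF assms] pcompose_idR pcompose_pCons_0)
  finally show ?thesis .
qed

lemma prod_Fq_Lq:
  assumes "Y \<in> linearized"
  shows "(\<Prod>c\<in>Fq q. Y - [:c * z:]) \<in> linearized"
proof (cases "z = 0")
  case True
  then have "(\<Prod>c\<in>Fq q. Y - [:c * z:]) = Y ^ (q ^ 1)"
    by (simp add: card_Fq)
  then show ?thesis
    using Lq_power_q_power[OF assms] by metis
next
  case False
  define W where "W = smult (1 / z) Y"
  have "Y - [:c * z:] = smult z (W - [:c:])" for c
    using False by (simp add: W_def smult_diff_right mult.commute)
  then have "(\<Prod>c\<in>Fq q. Y - [:c * z:]) = smult (z ^ q) (W ^ (q ^ 1) - W)"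
    by (simp add: prod_smult card_Fq prod_Fq_shift)
  then show ?thesis
    using Lq_power_q_power[of W 1] assms by (simp add: W_def)
qed

lemma Pi_g_Lq:
  assumes "lin_indep_Fq q n (g :: nat \<Rightarrow> 'a)" "s \<le> n"
  shows "Pi_g q s g \<in> linearized"
  using assms(2)
proof (induction s)
  case 0
  then show ?case
    by (simp add: Pi_g_def span_Fq_0)
next
  case (Suc s)
  let ?Y = "Pi_g q s g"
  have Y: "?Y \<in> linearized"
    using Suc by simp
  have "pcompose ?Y [:-(c * g s), 1:] = ?Y - [:c * poly ?Y (g s):]" if "c \<in> Fq q" for c
  proof -
    have "- c \<in> Fq q"
      using Fq_diff[OF Fq_0 that] by simp
    then show ?thesis
      using poly_Lq_Fq_smult[OF Y, of "- c" "g s"] by (simp add: pcompose_Lq_shift[OF Y])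
  qed
  then have "Pi_g q (Suc s) g = (\<Prod>c\<in>Fq q. ?Y - [:c * poly ?Y (g s):])"
    using Pi_g_Suc[OF lin_indep_Fq_prefix[OF assms(1) Suc.prems]] by simp
  then show ?case
    using prod_Fq_Lq[OF Y] by simp
qed

lemma card_span_Fq:
  assumes "lin_indep_Fq q n (g :: nat \<Rightarrow> 'a)" "s \<le> n"
  shows "card (span_Fq q s g) = q ^ s"
  using assms(2)
proof (induction s)
  case 0
  then show ?case
    by (simp add: span_Fq_0)
next
  case (Suc s)
  have "card (span_Fq q (Suc s) g) = (\<Sum>c\<in>Fq q. card ((\<lambda>v. v + c * g s) ` span_Fq q s g))"
    unfolding span_Fq_Suc
    using span_Fq_translates_disjoint[OF lin_indep_Fq_prefix[OF assms(1) Suc.prems]]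
    by (intro card_UN_disjoint) auto
  also have "\<dots> = (\<Sum>c\<in>(Fq q :: 'a set). q ^ s)"
    using Suc by (simp add: card_image inj_on_def)
  finally show ?case
    by (simp add: card_Fq)
qed

lemma Pi_g_Lq_qdeg:
  assumes "lin_indep_Fq q n (g :: nat \<Rightarrow> 'a)"
  shows "Pi_g q n g \<in> linearized" and "Pi_g q n g \<noteq> 0" and "qdeg q (Pi_g q n g) = n"
proof -
  show "Pi_g q n g \<in> linearized"
    using Pi_g_Lq[OF assms] by simp
  show "Pi_g q n g \<noteq> 0"
    by (simp add: Pi_g_def)
  have "degree (Pi_g q n g) = q ^ n"
    using card_span_Fq[OF assms] by (simp add: Pi_g_def degree_prod_eq_sum_degree)
  then show "qdeg q (Pi_g q n g) = n"
    by (rule qdeg_eqI)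
qed

end

definition Lq_below :: "nat \<Rightarrow> nat \<Rightarrow> 'a::zero poly set" where
  "Lq_below q n = {f. \<forall>d. coeff f d \<noteq> 0 \<longrightarrow> (\<exists>j<n. d = q ^ j)}"

lemma Lq_below_sum: "(\<And>i. i \<in> A \<Longrightarrow> f i \<in> Lq_below q n) \<Longrightarrow> sum f A \<in> Lq_below q n"
proof (induction A rule: infinite_finite_induct)
  case (insert x F)
  then show ?case
    unfolding Lq_below_def by (auto simp: coeff_add) (metis add.left_neutral)
qed (auto simp: Lq_below_def)

lemma Lq_below_smult: "f \<in> Lq_below q n \<Longrightarrow> smult c f \<in> Lq_below q n"
  unfolding Lq_below_def by (auto simp del: mult_eq_0_iff) (metis mult_zero_right)

lemma Lq_below_monom: "j < n \<Longrightarrow> monom c (q ^ j) \<in> Lq_below q n"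
  by (auto simp: Lq_below_def)

text \<open>Only the last column of \<open>Dmat\<close> is non-constant, and its entry in row \<open>j\<close> is
  \<open>x\<^sup>[\<^sup>j\<^sup>]\<close>; expanding along it shows that the determinant has \<open>q\<close>-degree below \<open>n\<close>.\<close>
lemma det_Dmat_Lq_below:
  fixes g :: "nat \<Rightarrow> 'a::field"
  assumes "i < n"
  shows "det (Dmat q n g i) \<in> Lq_below q n"
proof -
  define A where "A = Dmat q n g i"
  have A: "A \<in> carrier_mat n n"
    by (simp add: A_def Dmat_def)
  have "n - 1 < n"
    using assms by simp
  have "det A = (\<Sum>j<n. A $$ (j, n - 1) * cofactor A j (n - 1))"
    using laplace_expansion_column[OF A \<open>n - 1 < n\<close>] by simp
  also have "\<dots> \<in> Lq_below q n"
  proof (rule Lq_below_sum)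
    fix j assume "j \<in> {..<n}"
    have "\<not> n - 1 < i"
      using assms by simp
    then have "A $$ (j, n - 1) = monom 1 (q ^ j)"
      using \<open>j \<in> {..<n}\<close> assms by (simp add: A_def Dmat_def Let_def)
    have minor: "mat_delete A j (n - 1) \<in> carrier_mat (n - 1) (n - 1)"
      using mat_delete_carrier[OF A] .
    have "degree (mat_delete A j (n - 1) $$ (a, b)) = 0" if "a < n - 1" "b < n - 1" for a b
      using that A \<open>j \<in> {..<n}\<close> by (auto simp: mat_delete_def A_def Dmat_def Let_def)
    then obtain c where "cofactor A j (n - 1) = [:c:]"
      using det_const_mat[OF minor] by (simp add: cofactor_def poly_const_pow flip: pCons_one)
    then have "A $$ (j, n - 1) * cofactor A j (n - 1) = monom c (q ^ j)"
      using \<open>A $$ (j, n - 1) = monom 1 (q ^ j)\<close> by (simp add: monom_altdef)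
    then show "A $$ (j, n - 1) * cofactor A j (n - 1) \<in> Lq_below q n"
      using \<open>j \<in> {..<n}\<close> Lq_below_monom by simp
  qed
  finally show ?thesis
    unfolding A_def .
qed

lemma Lambda_gr_Lq_below: "Lambda_gr q n g r \<in> Lq_below q n"
  unfolding Lambda_gr_def by (intro Lq_below_sum Lq_below_smult det_Dmat_Lq_below) simp

context Fqm_field
begin

lemma Lq_below_Lq: "f \<in> Lq_below q n \<Longrightarrow> (f :: 'a poly) \<in> linearized"
  by (auto simp: Lq_below_def Lq_def)

lemma Lq_below_qdeg_less: "f \<in> Lq_below q n \<Longrightarrow> (f :: 'a poly) = 0 \<or> qdeg q f < n"
proof (cases "f = 0")
  case False
  assume "f \<in> Lq_below q n"
  moreover have "coeff f (degree f) \<noteq> 0"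
    using False by simp
  ultimately obtain j where "j < n" "degree f = q ^ j"
    unfolding Lq_below_def by blast
  then show ?thesis
    using qdeg_eqI by simp
qed simp

end

theorem theorem24:
  fixes q m n k :: nat and g r :: "nat \<Rightarrow> 'a::{finite, field}"
  assumes "\<exists>p e. prime p \<and> e \<ge> 1 \<and> q = p ^ e"
    and "m \<ge> 1"
    and "card (UNIV :: 'a set) = q ^ m"
    and "1 \<le> k" and "k \<le> n"
    and "lin_indep_Fq q n g"
  shows "\<exists>b1 b2. algorithm2 q k (Pi_g q n g) (Lambda_gr q n g r) = Some (b1, b2) \<and>
           minimal_basis q k {b1, b2} (interp_module q n g r) \<and>
           lpos q k b1 = 1 \<and> lpos q k b2 = 2"
proof -
  obtain p e where "prime p" "e \<ge> 1" "q = p ^ e"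
    using assms(1) by blast
  moreover have "card (UNIV :: 'a set) = p ^ (e * m)" and "e * m \<ge> 1"
    using assms(2,3) \<open>q = p ^ e\<close> \<open>e \<ge> 1\<close> by (simp_all add: power_mult)
  ultimately have "CHAR('a) = p"
    by (intro CHAR_eq_prime_of_card)
  then interpret Fqm_field q "TYPE('a)"
    using \<open>e \<ge> 1\<close> \<open>q = p ^ e\<close> assms(2,3) by unfold_locales auto
  have "Lambda_gr q n g r \<in> Lq_below q n"
    by (rule Lambda_gr_Lq_below)
  then have "Lambda_gr q n g r \<in> linearized"
    and "Lambda_gr q n g r = 0 \<or> qdeg q (Lambda_gr q n g r) < qdeg q (Pi_g q n g)"
    using Lq_below_Lq Lq_below_qdeg_less Pi_g_Lq_qdeg(3)[OF assms(6)] by auto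
  moreover have "interp_module q n g r = Lq_span2 q (Pi_g q n g, 0) (- Lambda_gr q n g r, [:0, 1:])"
    by (simp add: interp_module_def Lq_span2_def)
  ultimately show ?thesis
    using algorithm2_minimal_basis Pi_g_Lq_qdeg(1,2)[OF assms(6)] by simp
qed

end
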